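(* Let $S,W$ be random variables on $\mathcal S\times\mathcal W$ with joint law $P_{SW}$ and marginals $P_S,P_W$, and assume $P_{SW}\ll P_SP_W$; write $L:=\frac{\mathrm dP_{SW}}{\mathrm d(P_SP_W)}$. Let $E\subseteq\mathcal S\times\mathcal W$ be measurable, and for $w\in\mathcal W$ let $E_w:=\{s:(s,w)\in E\}$. Let $\psi,\varphi$ be Orlicz functions. Then for every $\gamma\in\mathbb R$, $$P_{SW}(E)\le \gamma\,(P_SP_W)(E)+\Big\Vert\, w\mapsto\big\Vert\mathds 1_{E_w}\big\Vert^{P_S}_{\varphi}\Big\Vert^{P_W}_{\psi}\cdot\Big\Vert\, w\mapsto\big\Vert [L(\cdot,w)-\gamma]_+\big\Vert^{A,P_S}_{\varphi^\star}\Big\Vert^{A,P_W}_{\psi^\star}.$$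
   Context: An Orlicz function is a convex $\psi:[0,\infty)\to[0,\infty]$ with $\psi(0)=0$ that is not identically $0$ or identically $\infty$ on $(0,\infty)$; its conjugate is $\psi^\star(t):=\sup_{\lambda>0}(\lambda t-\psi(\lambda))$. For a probability measure $\mu$ and measurable $U$, the Luxemburg norm is $\Vert U\Vert^\mu_\psi:=\inf\{\sigma>0:\mathbf E_\mu[\psi(|U|/\sigma)]\le1\}$ and the Amemiya norm is $\Vert U\Vert^{A,\mu}_\psi:=\inf\{(\mathbf E_\mu[\psi(t|U|)]+1)/t:\ t>0\}$. $[x]_+:=\max\{x,0\}$. *)

theory Defs
  imports "HOL-Probability.Probability"
begin

text \<open>Orlicz functions \<psi> : [0,\<infinity>) \<rightarrow> [0,\<infinity>], modelled as real \<Rightarrow> ennreal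
  (values at negative arguments are irrelevant).\<close>
definition orlicz :: "(real \<Rightarrow> ennreal) \<Rightarrow> bool" where
  "orlicz \<psi> \<longleftrightarrow> \<psi> 0 = 0
     \<and> (\<forall>x y t. 0 \<le> x \<longrightarrow> 0 \<le> y \<longrightarrow> 0 < t \<longrightarrow> t < 1 \<longrightarrow>
           \<psi> (t * x + (1 - t) * y) \<le> ennreal t * \<psi> x + ennreal (1 - t) * \<psi> y)
     \<and> (\<exists>x>0. \<psi> x \<noteq> 0)
     \<and> (\<exists>x>0. \<psi> x \<noteq> \<infinity>)"

definition orlicz_conj :: "(real \<Rightarrow> ennreal) \<Rightarrow> real \<Rightarrow> ennreal" where
  "orlicz_conj \<psi> t = e2ennreal (SUP l\<in>{0<..}. ereal (l * t) - enn2ereal (\<psi> l))"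

definition orlicz_app :: "(real \<Rightarrow> ennreal) \<Rightarrow> ennreal \<Rightarrow> ennreal" where
  "orlicz_app \<psi> x = (if x = \<infinity> then \<infinity> else \<psi> (enn2real x))"

text \<open>Luxemburg norm of |U| (U given as its absolute value, possibly \<infinity>).\<close>
definition luxemburg :: "'a measure \<Rightarrow> (real \<Rightarrow> ennreal) \<Rightarrow> ('a \<Rightarrow> ennreal) \<Rightarrow> ennreal" where
  "luxemburg \<mu> \<psi> U = Inf {ennreal \<sigma> | \<sigma>. \<sigma> > 0 \<and>
       (\<integral>\<^sup>+ x. orlicz_app \<psi> (U x / ennreal \<sigma>) \<partial>\<mu>) \<le> 1}"

definition amemiya :: "'a measure \<Rightarrow> (real \<Rightarrow> ennreal) \<Rightarrow> ('a \<Rightarrow> ennreal) \<Rightarrow> ennreal" where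
  "amemiya \<mu> \<psi> U = Inf {((\<integral>\<^sup>+ x. orlicz_app \<psi> (ennreal t * U x) \<partial>\<mu>) + 1) / ennreal t | t. t > 0}"

end

theory Submission
  imports Defs
begin

text \<open>Pointwise \<open>L \<le> \<gamma> + [L - \<gamma>]\<^sub>+\<close>, so \<open>P\<^sub>S\<^sub>W(E) \<le> \<gamma> (P\<^sub>S P\<^sub>W)(E) + \<integral>\<^sub>E [L - \<gamma>]\<^sub>+ d(P\<^sub>S P\<^sub>W)\<close>.
  By Tonelli the last integral is \<open>\<integral> (\<integral> 1\<^bsub>E\<^sub>w\<^esub> [L(\<cdot>, w) - \<gamma>]\<^sub>+ dP\<^sub>S) dP\<^sub>W\<close>, and the
  Orlicz-H\<ouml>lder inequality \<open>\<integral> U V \<le> \<parallel>U\<parallel>\<^sub>\<phi> \<parallel>V\<parallel>\<^sup>A\<^sub>\<phi>\<^sub>\<star>\<close>, a consequence of Young's inequality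
  \<open>u v \<le> \<phi>(u) + \<phi>\<^sup>\<star>(v)\<close> after rescaling \<open>u\<close> by an admissible Luxemburg radius and \<open>v\<close> by
  an Amemiya parameter, is applied first in \<open>s\<close> for each \<open>w\<close> and then in \<open>w\<close>.\<close>

lemma orlicz_scale_le:
  assumes "orlicz \<phi>" "0 \<le> x" "0 \<le> t" "t \<le> 1"
  shows "\<phi> (t * x) \<le> ennreal t * \<phi> x"
proof (cases "t = 0 \<or> t = 1")
  case True
  then show ?thesis using assms by (auto simp: orlicz_def)
next
  case False
  then have "0 < t" "t < 1" using assms by auto
  with assms have "\<phi> (t * x + (1 - t) * 0) \<le> ennreal t * \<phi> x + ennreal (1 - t) * \<phi> 0"
    unfolding orlicz_def by blast
  then show ?thesis using assms(1) by (simp add: orlicz_def)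
qed

lemma orlicz_mono:
  assumes "orlicz \<phi>" "0 \<le> x" "x \<le> y"
  shows "\<phi> x \<le> \<phi> y"
proof (cases "y = 0")
  case True
  then show ?thesis using assms by simp
next
  case False
  then have "0 < y" using assms by simp
  then have "\<phi> ((x / y) * y) \<le> ennreal (x / y) * \<phi> y"
    using assms by (intro orlicz_scale_le) auto
  also have "\<dots> \<le> 1 * \<phi> y"
    using \<open>0 < y\<close> assms by (intro mult_right_mono) (auto simp: ennreal_le_1)
  finally show ?thesis using \<open>0 < y\<close> by simp
qed

lemma orlicz_scale_ge:
  assumes "orlicz \<phi>" "0 < x" "x \<le> l"
  shows "ennreal (l / x) * \<phi> x \<le> \<phi> l"
proof -
  have "\<phi> ((x / l) * l) \<le> ennreal (x / l) * \<phi> l"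
    using assms by (intro orlicz_scale_le) auto
  then have "ennreal (l / x) * \<phi> x \<le> ennreal (l / x) * (ennreal (x / l) * \<phi> l)"
    using assms by (intro mult_left_mono) auto
  also have "\<dots> = \<phi> l"
    using assms by (simp add: mult.assoc[symmetric] ennreal_mult[symmetric])
  finally show ?thesis .
qed

lemma orlicz_conj_le:
  assumes "orlicz \<phi>" "0 < x" "0 \<le> t" "ennreal (x * t) \<le> \<phi> x"
  shows "orlicz_conj \<phi> t \<le> ennreal (x * t)"
proof -
  have "ereal (l * t) - enn2ereal (\<phi> l) \<le> ereal (x * t)" if "0 < l" for l
  proof (cases "l \<le> x")
    case True
    then have "ereal (l * t) \<le> ereal (x * t)" using assms by (simp add: mult_right_mono)
    then show ?thesis by (meson enn2ereal_nonneg ereal_diff_le_self order.trans)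
  next
    case False
    have "ennreal (l * t) = ennreal (l / x) * ennreal (x * t)"
      using assms \<open>0 < l\<close> by (simp add: ennreal_mult[symmetric])
    also have "\<dots> \<le> ennreal (l / x) * \<phi> x" using assms by (intro mult_left_mono) auto
    also have "\<dots> \<le> \<phi> l" using False assms by (intro orlicz_scale_ge) auto
    finally have "ereal (l * t) \<le> enn2ereal (\<phi> l)"
      using assms \<open>0 < l\<close> by (simp add: less_eq_ennreal.rep_eq)
    then have "ereal (l * t) - enn2ereal (\<phi> l) \<le> 0" using ereal_diff_nonpos by fastforce
    also have "\<dots> \<le> ereal (x * t)" using assms by simp
    finally show ?thesis .
  qed
  then have "(SUP l\<in>{0<..}. ereal (l * t) - enn2ereal (\<phi> l)) \<le> ereal (x * t)"
    by (intro SUP_least) auto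
  then show ?thesis
    unfolding orlicz_conj_def using assms by (metis e2ennreal_mono e2ennreal_ereal)
qed

lemma orlicz_conj_finite:
  assumes "orlicz \<phi>"
  obtains t where "0 < t" "orlicz_conj \<phi> t \<noteq> \<top>"
proof -
  obtain x where x: "0 < x" "\<phi> x \<noteq> 0" using assms unfolding orlicz_def by blast
  obtain t where t: "0 < t" "ennreal (x * t) \<le> \<phi> x"
  proof (cases "\<phi> x")
    case (real p)
    then show ?thesis using x by (intro that[of "p / x"]) auto
  next
    case top
    then show ?thesis by (intro that[of 1]) auto
  qed
  then have "orlicz_conj \<phi> t \<le> ennreal (x * t)" using assms x by (intro orlicz_conj_le) auto
  then show ?thesis using t by (intro that[of t]) (auto simp: top_unique)
qed

lemma borel_measurable_mono_complete_linorder: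
  fixes g :: "'a::{complete_linorder, linorder_topology}
    \<Rightarrow> 'b::{linorder_topology, second_countable_topology}"
  assumes "mono g"
  shows "g \<in> borel_measurable borel"
proof (rule borel_measurableI_greater)
  fix y
  define S where "S = {x. y < g x}"
  have up: "x \<in> S" if "s \<in> S" "s \<le> x" for s x
    using that assms unfolding S_def by (auto dest: monoD intro: less_le_trans)
  have "S = {Inf S..} \<or> S = {Inf S<..}"
  proof (cases "Inf S \<in> S")
    case True
    then show ?thesis by (auto intro: Inf_lower up)
  next
    case False
    have "x \<in> S" if "Inf S < x" for x
      using that by (auto simp: Inf_less_iff intro: up less_imp_le)
    then show ?thesis using False by (auto intro: Inf_lower order.not_eq_order_implies_strict)
  qed
  then show "{x \<in> space borel. y < g x} \<in> sets borel"
    unfolding S_def by (metis space_borel Collect_conj_eq Int_UNIV_left Collect_mem_eq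
        atLeast_borel greaterThan_borel)
qed

lemma mono_orlicz_app:
  assumes "orlicz \<phi>"
  shows "mono (orlicz_app \<phi>)"
proof
  fix x y :: ennreal
  assume "x \<le> y"
  then show "orlicz_app \<phi> x \<le> orlicz_app \<phi> y"
    using assms by (cases x; cases y) (auto simp: orlicz_app_def top_unique intro!: orlicz_mono)
qed

lemma borel_measurable_orlicz_app[measurable]:
  "orlicz \<phi> \<Longrightarrow> orlicz_app \<phi> \<in> borel_measurable borel"
  by (intro borel_measurable_mono_complete_linorder mono_orlicz_app)

lemma orlicz_young:
  fixes u v :: ennreal
  shows "u * v \<le> orlicz_app \<phi> u + orlicz_app (orlicz_conj \<phi>) v"
proof (cases "u = \<top> \<or> v = \<top> \<or> u = 0")
  case True
  then show ?thesis by (auto simp: orlicz_app_def)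
next
  case False
  then obtain a b where ab: "u = ennreal a" "v = ennreal b" "0 < a" "0 \<le> b"
    by (cases u; cases v) auto
  have "ennreal (a * b) \<le> \<phi> a + e2ennreal (ereal (a * b) - enn2ereal (\<phi> a))"
  proof (cases "\<phi> a")
    case (real p)
    then show ?thesis
      by (cases "p \<le> a * b") (auto simp: ennreal_plus[symmetric] ennreal_neg ennreal_leI
          simp del: ennreal_plus)
  qed simp
  also have "\<dots> \<le> \<phi> a + orlicz_conj \<phi> b"
    unfolding orlicz_conj_def using ab
    by (intro add_left_mono e2ennreal_mono SUP_upper) auto
  finally show ?thesis using ab by (simp add: orlicz_app_def ennreal_mult)
qed

text \<open>No measurability of \<open>g\<close> is needed: in the outer H\<ouml>lder step \<open>g\<close> involves the Amemiya
  norms of the sections, whose measurability in \<open>w\<close> is not known.\<close>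

lemma nn_integral_le_add_nonmeasurable:
  assumes [measurable]: "f \<in> borel_measurable M" "h \<in> borel_measurable M"
    and "\<And>x. x \<in> space M \<Longrightarrow> h x \<le> f x + g x"
  shows "(\<integral>\<^sup>+x. h x \<partial>M) \<le> (\<integral>\<^sup>+x. f x \<partial>M) + (\<integral>\<^sup>+x. g x \<partial>M)"
proof -
  define d where "d x = (if f x = \<top> then 0 else h x - f x)" for x
  have "(\<integral>\<^sup>+x. h x \<partial>M) \<le> (\<integral>\<^sup>+x. f x + d x \<partial>M)"
    using ennreal_minus_le_iff[of "h x" "f x" "h x - f x" for x]
    by (intro nn_integral_mono) (auto simp: d_def)
  also have "\<dots> = (\<integral>\<^sup>+x. f x \<partial>M) + (\<integral>\<^sup>+x. d x \<partial>M)"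
    unfolding d_def by (intro nn_integral_add) auto
  also have "(\<integral>\<^sup>+x. d x \<partial>M) \<le> (\<integral>\<^sup>+x. g x \<partial>M)"
    using assms(3) by (intro nn_integral_mono) (auto simp: d_def ennreal_minus_le_iff)
  finally show ?thesis by (simp add: add_left_mono)
qed

definition luxemburg_admissible ::
    "'a measure \<Rightarrow> (real \<Rightarrow> ennreal) \<Rightarrow> ('a \<Rightarrow> ennreal) \<Rightarrow> real \<Rightarrow> bool"
  where "luxemburg_admissible M \<phi> U \<sigma> \<longleftrightarrow>
    0 < \<sigma> \<and> (\<integral>\<^sup>+x. orlicz_app \<phi> (U x / ennreal \<sigma>) \<partial>M) \<le> 1"

lemma luxemburg_eq_INF:
  "luxemburg M \<phi> U = (INF \<sigma>\<in>Collect (luxemburg_admissible M \<phi> U). ennreal \<sigma>)"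
  unfolding luxemburg_def luxemburg_admissible_def by (simp add: image_def conj_commute)

lemma luxemburg_le: "luxemburg_admissible M \<phi> U \<sigma> \<Longrightarrow> luxemburg M \<phi> U \<le> ennreal \<sigma>"
  unfolding luxemburg_eq_INF by (rule INF_lower) simp

lemma luxemburg_admissible_mono:
  assumes "orlicz \<phi>" "\<And>x. x \<in> space M \<Longrightarrow> U x \<le> U' x" "luxemburg_admissible M \<phi> U' \<sigma>"
  shows "luxemburg_admissible M \<phi> U \<sigma>"
proof -
  have "(\<integral>\<^sup>+x. orlicz_app \<phi> (U x / ennreal \<sigma>) \<partial>M) \<le> (\<integral>\<^sup>+x. orlicz_app \<phi> (U' x / ennreal \<sigma>) \<partial>M)"
    using assms by (intro nn_integral_mono monoD[OF mono_orlicz_app] divide_right_mono_ennreal)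
  then show ?thesis using assms(3) unfolding luxemburg_admissible_def by (meson order.trans)
qed

lemma ex_luxemburg_admissible_const:
  assumes "prob_space M" "orlicz \<phi>" "0 < c"
  obtains \<sigma> where "luxemburg_admissible M \<phi> (\<lambda>_. ennreal c) \<sigma>"
proof -
  obtain x q where x: "0 < x" "\<phi> x = ennreal q" "0 \<le> q"
    using assms(2) unfolding orlicz_def by (metis ennreal_cases infinity_ennreal_def)
  define l where "l = 1 / (q + 1)"
  have l: "0 < l" "l \<le> 1" "l * q \<le> 1" using x by (auto simp: l_def field_simps)
  have "\<phi> (l * x) \<le> ennreal l * \<phi> x" using assms x l by (intro orlicz_scale_le) auto
  also have "\<dots> \<le> 1" using x l by (simp add: ennreal_mult[symmetric])
  finally have "\<phi> (l * x) \<le> 1" .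
  moreover have "ennreal c / ennreal (c / (l * x)) = ennreal (l * x)"
    using assms x l by (simp add: divide_ennreal)
  ultimately have "luxemburg_admissible M \<phi> (\<lambda>_. ennreal c) (c / (l * x))"
    using assms x l by (simp add: luxemburg_admissible_def orlicz_app_def prob_space.emeasure_space_1)
  then show ?thesis ..
qed

lemma orlicz_holder_admissible:
  assumes "orlicz \<phi>" and [measurable]: "U \<in> borel_measurable M" "H \<in> borel_measurable M"
    and HUV: "\<And>x. x \<in> space M \<Longrightarrow> H x \<le> U x * V x"
    and adm: "luxemburg_admissible M \<phi> U \<sigma>"
  shows "(\<integral>\<^sup>+x. H x \<partial>M) \<le> ennreal \<sigma> * amemiya M (orlicz_conj \<phi>) V"
proof -
  have "0 < \<sigma>" using adm by (simp add: luxemburg_admissible_def)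
  let ?a = "\<lambda>x. orlicz_app \<phi> (U x / ennreal \<sigma>)"
  have "(\<integral>\<^sup>+x. H x \<partial>M) / ennreal \<sigma>
      \<le> ((\<integral>\<^sup>+x. orlicz_app (orlicz_conj \<phi>) (ennreal t * V x) \<partial>M) + 1) / ennreal t"
    if "0 < t" for t
  proof -
    let ?b = "\<lambda>x. orlicz_app (orlicz_conj \<phi>) (ennreal t * V x)"
    have "ennreal t * (H x / ennreal \<sigma>) \<le> ?a x + ?b x" if "x \<in> space M" for x
    proof -
      have "ennreal t * (H x / ennreal \<sigma>) \<le> ennreal t * (U x * V x / ennreal \<sigma>)"
        using HUV that by (intro mult_left_mono divide_right_mono_ennreal) auto
      also have "\<dots> = (U x / ennreal \<sigma>) * (ennreal t * V x)"
        by (simp add: ennreal_times_divide ennreal_divide_times mult_ac)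
      also have "\<dots> \<le> ?a x + ?b x" by (rule orlicz_young)
      finally show ?thesis .
    qed
    then have "(\<integral>\<^sup>+x. ennreal t * (H x / ennreal \<sigma>) \<partial>M) \<le> (\<integral>\<^sup>+x. ?a x \<partial>M) + (\<integral>\<^sup>+x. ?b x \<partial>M)"
      using assms(1) by (intro nn_integral_le_add_nonmeasurable) auto
    also have "\<dots> \<le> (\<integral>\<^sup>+x. ?b x \<partial>M) + 1"
      using adm by (simp add: luxemburg_admissible_def add.commute add_left_mono)
    finally have "ennreal t * ((\<integral>\<^sup>+x. H x \<partial>M) / ennreal \<sigma>) \<le> (\<integral>\<^sup>+x. ?b x \<partial>M) + 1"
      using \<open>0 < \<sigma>\<close> by (simp add: nn_integral_cmult nn_integral_divide)
    then show ?thesis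
      using \<open>0 < t\<close> by (metis divide_right_mono_ennreal mult.commute mult_divide_eq_ennreal
          ennreal_eq_0_iff ennreal_neq_top not_le)
  qed
  then have "(\<integral>\<^sup>+x. H x \<partial>M) / ennreal \<sigma> \<le> amemiya M (orlicz_conj \<phi>) V"
    unfolding amemiya_def by (intro Inf_greatest) auto
  then show ?thesis
    using \<open>0 < \<sigma>\<close> by (metis ennreal_times_divide mult_divide_eq_ennreal mult.commute
        mult_left_mono zero_le ennreal_eq_0_iff ennreal_neq_top not_le)
qed

lemma le_INF_mult_ennreal:
  fixes X C :: ennreal
  assumes "C \<noteq> \<top>" "A \<noteq> {}" "\<And>y. y \<in> A \<Longrightarrow> X \<le> f y * C"
  shows "X \<le> (INF y\<in>A. f y) * C"
proof (cases "C = 0")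
  case True
  then show ?thesis using assms by auto
next
  case False
  have "X / C \<le> (INF y\<in>A. f y)"
    using assms False by (intro INF_greatest divide_le_posI_ennreal) (auto simp: mult.commute)
  then have "X / C * C \<le> (INF y\<in>A. f y) * C" by (rule mult_right_mono) simp
  then show ?thesis using assms False by (simp add: ennreal_divide_times ennreal_times_divide
      mult_divide_eq_ennreal)
qed

lemma amemiya_conj_one_finite:
  assumes "prob_space M" "orlicz \<phi>"
  shows "amemiya M (orlicz_conj \<phi>) (\<lambda>_. 1) \<noteq> \<top>"
proof -
  obtain t where t: "0 < t" "orlicz_conj \<phi> t \<noteq> \<top>" using orlicz_conj_finite[OF assms(2)] .
  have "amemiya M (orlicz_conj \<phi>) (\<lambda>_. 1) \<le> (orlicz_conj \<phi> t + 1) / ennreal t"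
    unfolding amemiya_def using t assms(1)
    by (intro Inf_lower) (auto simp: orlicz_app_def prob_space.emeasure_space_1 intro!: exI[of _ t])
  moreover have "(orlicz_conj \<phi> t + 1) / ennreal t \<noteq> \<top>"
    using t by (simp add: ennreal_divide_eq_top_iff)
  ultimately show ?thesis by (metis top_unique)
qed

lemma orlicz_holder:
  assumes M: "prob_space M" and \<phi>: "orlicz \<phi>"
    and [measurable]: "U \<in> borel_measurable M" "H \<in> borel_measurable M"
    and HUV: "\<And>x. x \<in> space M \<Longrightarrow> H x \<le> U x * V x"
    and "\<exists>\<sigma>. luxemburg_admissible M \<phi> U \<sigma>"
  shows "(\<integral>\<^sup>+x. H x \<partial>M) \<le> luxemburg M \<phi> U * amemiya M (orlicz_conj \<phi>) V"
proof -
  have finite_case: "(\<integral>\<^sup>+x. H' x \<partial>M) \<le> luxemburg M \<phi> U * amemiya M (orlicz_conj \<phi>) V'"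
    if "H' \<in> borel_measurable M" "\<And>x. x \<in> space M \<Longrightarrow> H' x \<le> U x * V' x"
      "amemiya M (orlicz_conj \<phi>) V' \<noteq> \<top>" for H' V'
    unfolding luxemburg_eq_INF using that assms(3,6)
    by (intro le_INF_mult_ennreal orlicz_holder_admissible[OF \<phi>]) auto
  show ?thesis
  proof (cases "amemiya M (orlicz_conj \<phi>) V = \<top> \<and> luxemburg M \<phi> U = 0")
    case True
    \<comment> \<open>H\<ouml>lder against the constant 1, whose Amemiya norm is finite, forces \<open>U = 0\<close> a.e.\<close>
    have "(\<integral>\<^sup>+x. U x \<partial>M) \<le> luxemburg M \<phi> U * amemiya M (orlicz_conj \<phi>) (\<lambda>_. 1)"
      using amemiya_conj_one_finite[OF M \<phi>] by (intro finite_case) auto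
    then have "AE x in M. U x = 0" using True by (simp add: nn_integral_0_iff_AE)
    then have "AE x in M. H x = 0"
      by (rule AE_mp) (use HUV in \<open>intro AE_I2, metis le_zero_eq mult_zero_left\<close>)
    then have "(\<integral>\<^sup>+x. H x \<partial>M) = 0" by (simp add: nn_integral_0_iff_AE)
    then show ?thesis by simp
  next
    case False
    then show ?thesis
      using finite_case[of H V] HUV by (cases "amemiya M (orlicz_conj \<phi>) V = \<top>") auto
  qed
qed

lemma luxemburg_indicator:
  assumes "orlicz \<phi>" "A \<in> sets M"
  shows "luxemburg M \<phi> (indicator A)
    = (INF \<sigma>\<in>{\<sigma>. 0 < \<sigma> \<and> \<phi> (1 / \<sigma>) * emeasure M A \<le> 1}. ennreal \<sigma>)"
proof -
  have "orlicz_app \<phi> (indicator A x / ennreal \<sigma>) = \<phi> (1 / \<sigma>) * indicator A x" if "0 < \<sigma>" for \<sigma> x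
  proof -
    have "1 / ennreal \<sigma> = ennreal (1 / \<sigma>)" using that by (simp add: divide_ennreal[symmetric])
    then show ?thesis using assms that by (auto simp: indicator_def orlicz_app_def orlicz_def)
  qed
  then show ?thesis
    unfolding luxemburg_eq_INF luxemburg_admissible_def using assms
    by (intro INF_cong) (auto simp: nn_integral_cmult_indicator)
qed

lemma borel_measurable_luxemburg_indicator_section:
  assumes "pair_sigma_finite M N" "orlicz \<phi>" "E \<in> sets (M \<Otimes>\<^sub>M N)"
  shows "(\<lambda>w. luxemburg M \<phi> (\<lambda>s. indicator E (s, w))) \<in> borel_measurable N"
proof -
  define G where "G m = (INF \<sigma>\<in>{\<sigma>. 0 < \<sigma> \<and> \<phi> (1 / \<sigma>) * m \<le> 1}. ennreal \<sigma>)" for m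
  have "mono G"
    unfolding G_def by (intro monoI INF_superset_mono) (auto intro: order_trans[OF mult_left_mono])
  moreover have "luxemburg M \<phi> (\<lambda>s. indicator E (s, w)) = G (emeasure M ((\<lambda>s. (s, w)) -` E))" for w
    using luxemburg_indicator[OF assms(2) sets_Pair2[OF assms(3)]]
    by (simp add: G_def indicator_vimage[abs_def])
  ultimately show ?thesis
    using pair_sigma_finite.measurable_emeasure_Pair2[OF assms(1,3)]
    by (simp add: measurable_compose[where g = G, OF _ borel_measurable_mono_complete_linorder])
qed

lemma nn_integral_indicator_le_iterated_orlicz_norms:
  assumes M: "prob_space M" and N: "prob_space N" and \<psi>: "orlicz \<psi>" and \<phi>: "orlicz \<phi>"
    and E[measurable]: "E \<in> sets (M \<Otimes>\<^sub>M N)" and [measurable]: "V \<in> borel_measurable (M \<Otimes>\<^sub>M N)"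
  shows "(\<integral>\<^sup>+x. indicator E x * V x \<partial>(M \<Otimes>\<^sub>M N))
    \<le> luxemburg N \<psi> (\<lambda>w. luxemburg M \<phi> (\<lambda>s. indicator E (s, w)))
      * amemiya N (orlicz_conj \<psi>) (\<lambda>w. amemiya M (orlicz_conj \<phi>) (\<lambda>s. V (s, w)))"
proof -
  interpret pair_prob_space M N
    using M N by (simp add: pair_prob_space_def pair_sigma_finite_def prob_space_imp_sigma_finite)
  have [measurable]: "(\<lambda>w. luxemburg M \<phi> (\<lambda>s. indicator E (s, w))) \<in> borel_measurable N"
    by (rule borel_measurable_luxemburg_indicator_section[OF pair_sigma_finite_axioms \<phi> E])
  obtain \<sigma> where \<sigma>: "luxemburg_admissible M \<phi> (\<lambda>_. 1) \<sigma>"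
    using ex_luxemburg_admissible_const[OF M \<phi> zero_less_one] by (metis ennreal_1)
  have section_admissible: "luxemburg_admissible M \<phi> (\<lambda>s. indicator E (s, w)) \<sigma>" for w
    by (rule luxemburg_admissible_mono[OF \<phi> _ \<sigma>]) (simp add: indicator_def)
  have "0 < \<sigma>" using \<sigma> by (simp add: luxemburg_admissible_def)
  then obtain \<tau> where \<tau>: "luxemburg_admissible N \<psi> (\<lambda>_. ennreal \<sigma>) \<tau>"
    by (rule ex_luxemburg_admissible_const[OF N \<psi>])
  have "(\<integral>\<^sup>+x. indicator E x * V x \<partial>(M \<Otimes>\<^sub>M N))
      = (\<integral>\<^sup>+w. (\<integral>\<^sup>+s. indicator E (s, w) * V (s, w) \<partial>M) \<partial>N)"
    by (rule nn_integral_snd[symmetric]) measurable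
  also have "\<dots> \<le> luxemburg N \<psi> (\<lambda>w. luxemburg M \<phi> (\<lambda>s. indicator E (s, w)))
      * amemiya N (orlicz_conj \<psi>) (\<lambda>w. amemiya M (orlicz_conj \<phi>) (\<lambda>s. V (s, w)))"
  proof (rule orlicz_holder[OF N \<psi>])
    show "(\<integral>\<^sup>+s. indicator E (s, w) * V (s, w) \<partial>M)
        \<le> luxemburg M \<phi> (\<lambda>s. indicator E (s, w)) * amemiya M (orlicz_conj \<phi>) (\<lambda>s. V (s, w))"
      if "w \<in> space N" for w
      using that section_admissible by (intro orlicz_holder[OF M \<phi>]) auto
    show "\<exists>\<tau>. luxemburg_admissible N \<psi> (\<lambda>w. luxemburg M \<phi> (\<lambda>s. indicator E (s, w))) \<tau>"
      by (intro exI[of _ \<tau>] luxemburg_admissible_mono[OF \<psi> _ \<tau>] luxemburg_le[OF section_admissible])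
  qed auto
  finally show ?thesis .
qed

lemma measure_density_le_threshold:
  assumes "finite_measure Q" and [measurable]: "L \<in> borel_measurable Q" "E \<in> sets Q"
    and L_nonneg: "\<And>x. 0 \<le> L x"
  shows "ereal (measure (density Q (\<lambda>x. ennreal (L x))) E)
    \<le> ereal (\<gamma> * measure Q E) + enn2ereal (\<integral>\<^sup>+x. indicator E x * ennreal (max (L x - \<gamma>) 0) \<partial>Q)"
proof -
  define P where "P = density Q (\<lambda>x. ennreal (L x))"
  define I where "I = (\<integral>\<^sup>+x. indicator E x * ennreal (max (L x - \<gamma>) 0) \<partial>Q)"
  define \<gamma>\<^sub>p \<gamma>\<^sub>n where "\<gamma>\<^sub>p = max \<gamma> 0" and "\<gamma>\<^sub>n = max (- \<gamma>) 0"
  have QE: "emeasure Q E = ennreal (measure Q E)"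
    using assms(1) by (simp add: finite_measure.emeasure_eq_measure)
  \<comment> \<open>\<open>L \<le> \<gamma> + [L - \<gamma>]\<^sub>+\<close>, rearranged so that both sides are nonnegative\<close>
  have pointwise: "ennreal (L x) + ennreal \<gamma>\<^sub>n \<le> ennreal \<gamma>\<^sub>p + ennreal (max (L x - \<gamma>) 0)" for x
  proof -
    have "ennreal (L x) + ennreal \<gamma>\<^sub>n = ennreal (L x + \<gamma>\<^sub>n)"
      using L_nonneg by (intro ennreal_plus[symmetric]) (auto simp: \<gamma>\<^sub>n_def)
    also have "\<dots> \<le> ennreal (\<gamma>\<^sub>p + max (L x - \<gamma>) 0)"
      by (intro ennreal_leI) (simp add: \<gamma>\<^sub>p_def \<gamma>\<^sub>n_def split: split_max)
    also have "\<dots> = ennreal \<gamma>\<^sub>p + ennreal (max (L x - \<gamma>) 0)"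
      by (intro ennreal_plus) (auto simp: \<gamma>\<^sub>p_def)
    finally show ?thesis .
  qed
  have "emeasure P E + ennreal \<gamma>\<^sub>n * emeasure Q E
      = (\<integral>\<^sup>+x. ennreal (L x) * indicator E x + ennreal \<gamma>\<^sub>n * indicator E x \<partial>Q)"
    by (simp add: P_def emeasure_density nn_integral_add nn_integral_cmult_indicator)
  also have "\<dots> \<le> (\<integral>\<^sup>+x. ennreal \<gamma>\<^sub>p * indicator E x + indicator E x * ennreal (max (L x - \<gamma>) 0) \<partial>Q)"
    using pointwise by (intro nn_integral_mono) (simp add: indicator_def)
  also have "\<dots> = ennreal \<gamma>\<^sub>p * emeasure Q E + I"
    by (simp add: I_def nn_integral_add nn_integral_cmult_indicator)
  finally have le: "emeasure P E + ennreal (\<gamma>\<^sub>n * measure Q E) \<le> ennreal (\<gamma>\<^sub>p * measure Q E) + I"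
    by (simp add: QE ennreal_mult \<gamma>\<^sub>p_def \<gamma>\<^sub>n_def)
  show ?thesis
  proof (cases "I = \<top>")
    case False
    then obtain r where r: "I = ennreal r" "0 \<le> r" by (cases I) auto
    with le have "emeasure P E \<noteq> \<top>" by (auto simp: top_unique)
    with le r have "measure P E + \<gamma>\<^sub>n * measure Q E \<le> \<gamma>\<^sub>p * measure Q E + r"
      by (auto simp: emeasure_eq_ennreal_measure \<gamma>\<^sub>p_def \<gamma>\<^sub>n_def ennreal_plus[symmetric]
          simp del: ennreal_plus)
    then show ?thesis
      unfolding P_def[symmetric] I_def[symmetric] using r
      by (cases "0 \<le> \<gamma>") (auto simp: \<gamma>\<^sub>p_def \<gamma>\<^sub>n_def algebra_simps)
  qed (simp add: I_def)
qed

theorem theorem3: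
  fixes MS :: "'s measure" and MW :: "'w measure" and P :: "('s \<times> 'w) measure"
    and L :: "'s \<times> 'w \<Rightarrow> real" and E :: "('s \<times> 'w) set"
    and \<psi> \<phi> :: "real \<Rightarrow> ennreal" and \<gamma> :: real
  assumes PS: "prob_space MS" and PW: "prob_space MW"
    and "distr P MS fst = MS" and "distr P MW snd = MW"
    and "L \<in> borel_measurable (MS \<Otimes>\<^sub>M MW)" and "\<And>x. L x \<ge> 0"
    and "P = density (MS \<Otimes>\<^sub>M MW) (\<lambda>x. ennreal (L x))"
    and "E \<in> sets (MS \<Otimes>\<^sub>M MW)"
    and "orlicz \<psi>" and "orlicz \<phi>"
  shows "ereal (measure P E)
     \<le> ereal (\<gamma> * measure (MS \<Otimes>\<^sub>M MW) E)
        + enn2ereal (luxemburg MW \<psi> (\<lambda>w. luxemburg MS \<phi> (\<lambda>s. indicator E (s, w)))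
            * amemiya MW (orlicz_conj \<psi>)
                (\<lambda>w. amemiya MS (orlicz_conj \<phi>) (\<lambda>s. ennreal (max (L (s, w) - \<gamma>) 0))))"
proof -
  note [measurable] = assms(5)
  interpret pair_prob_space MS MW
    using PS PW by (simp add: pair_prob_space_def pair_sigma_finite_def prob_space_imp_sigma_finite)
  let ?V = "\<lambda>x. ennreal (max (L x - \<gamma>) 0)"
  have density: "ereal (measure P E)
      \<le> ereal (\<gamma> * measure (MS \<Otimes>\<^sub>M MW) E) + enn2ereal (\<integral>\<^sup>+x. indicator E x * ?V x \<partial>(MS \<Otimes>\<^sub>M MW))"
    unfolding assms(7) using finite_measure_axioms assms(5,8,6) by (rule measure_density_le_threshold)
  have iterated: "(\<integral>\<^sup>+x. indicator E x * ?V x \<partial>(MS \<Otimes>\<^sub>M MW))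
      \<le> luxemburg MW \<psi> (\<lambda>w. luxemburg MS \<phi> (\<lambda>s. indicator E (s, w)))
        * amemiya MW (orlicz_conj \<psi>) (\<lambda>w. amemiya MS (orlicz_conj \<phi>) (\<lambda>s. ?V (s, w)))"
    by (rule nn_integral_indicator_le_iterated_orlicz_norms[OF PS PW assms(9,10,8)]) simp
  show ?thesis
    using order.trans[OF density add_left_mono[OF iterated[unfolded less_eq_ennreal.rep_eq]]] .
qed

end
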